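(* Let $n\ge1$ and $d\ge0$ be integers, and let $M(x)$ be a monic complex polynomial of degree $2n$, written as $M=A^2+B$ with $A(x)=x^n+\sum_{j=0}^{n-1}a_jx^j$, $B(x)=\sum_{j=0}^{n-1}b_jx^j$. The equation $y''=M(x)y$ has a polynomial-hyperexponential solution of polynomial degree $d$ if and only if $$b_{n-1}^2=(n+2d)^2\quad\text{and}\quad \Delta_d(A(x),B(x))\cdot\Delta_d(-A(x),B(x))=0$$ (the latter as a polynomial identity in $x$). Consequently $\mathbb{L}'_{2n,d}$ is an algebraic subvariety of $\mathbb{M}_{2n}$ (its equations being $b_{n-1}^2=(n+2d)^2$ together with the coefficients in $x$ of $\Delta_d(A,B)\Delta_d(-A,B)$), contained in the union of the hyperplanes $b_{n-1}=2d+n$ and $-b_{n-1}=2d+n$.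
   Context: $\mathbb{Q}\{a,b\}$ is the ring of differential polynomials in two differential indeterminates $a,b$ over $\mathbb{Q}$. Define $\varphi$ on $2\times2$ matrices over $\mathbb{Q}\{a,b\}$ by $\varphi(C)=C'+\begin{pmatrix}-2a&1\\ b-a'&0\end{pmatrix}C$ (entrywise derivative), and $\Delta_p=-\det\left(\varphi^{p+1}(\mathrm{Id})\right)\in\mathbb{Q}\{a,b\}$. Equivalently, with $\ell_{-1}=1$, $r_{-1}=0$, $\ell_0=-2a$, $r_0=b-a'$, $\ell_{j+1}=\ell_j'+r_j+\ell_0\ell_j$, $r_{j+1}=r_j'+r_0\ell_j$, one has $\varphi^{p+1}(\mathrm{Id})=\begin{pmatrix}\ell_p&\ell_{p-1}\\ r_p&r_{p-1}\end{pmatrix}$ and $\Delta_p=r_p\ell_{p-1}-\ell_pr_{p-1}$ (e.g. $\Delta_0=b-a'$). $\Delta_d(A(x),B(x))$ means substituting $a\mapsto A(x)$, $b\mapsto B(x)$, with derivation $d/dx$. $\mathbb{M}_{2n}$ is the set of monic degree-$2n$ polynomials with coordinates $(a_0,\dots,a_{n-1},b_0,\dots,b_{n-1})$ given by the unique decomposition $M=A^2+B$ above. A polynomial-hyperexponential function of polynomial degree $d$ is $P_d(x)\exp(\int A(x)dx)$ with $P_d$ of degree exactly $d$ and $A$ a polynomial; $\mathbb{L}'_{2n,d}$ is the set of $M\in\mathbb{M}_{2n}$ such that $y''=My$ has such a solution. *)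

theory Defs
  imports "HOL-Analysis.Analysis" "HOL-Computational_Algebra.Polynomial"
begin

text \<open>The sequences ell_j, r_j evaluated at (a,b) = (A(x),B(x)), with the derivation d/dx
  realised by pderiv. Index shift: lr A B k = (ell_(k-1), r_(k-1)), so lr A B 0 = (1,0)
  is (ell_(-1), r_(-1)). The recurrence ell_(j+1) = ell_j' + r_j + ell_0 ell_j,
  r_(j+1) = r_j' + r_0 ell_j also holds for j = -1, giving ell_0 = -2A, r_0 = B - A'.\<close>

fun lr :: "complex poly \<Rightarrow> complex poly \<Rightarrow> nat \<Rightarrow> complex poly \<times> complex poly" where
  "lr A B 0 = (1, 0)"
| "lr A B (Suc k) =
     (let (l, r) = lr A B k
      in (pderiv l + r + smult (-2) A * l, pderiv r + (B - pderiv A) * l))"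

definition Delta :: "nat \<Rightarrow> complex poly \<Rightarrow> complex poly \<Rightarrow> complex poly" where
  "Delta p A B =
     snd (lr A B (Suc p)) * fst (lr A B p) - fst (lr A B (Suc p)) * snd (lr A B p)"

definition has_polyhyperexp_sol :: "complex poly \<Rightarrow> nat \<Rightarrow> bool" where
  "has_polyhyperexp_sol M d \<longleftrightarrow>
     (\<exists>P Q F. P \<noteq> 0 \<and> degree P = d \<and> pderiv F = Q \<and>
        (let y = (\<lambda>x. poly P x * exp (poly F x))
         in \<forall>x. deriv (deriv y) x = poly M x * y x))"

end

theory Submission
  imports Defs "HOL-Computational_Algebra.Polynomial_Factorial" "HOL-Computational_Algebra.Field_as_Ring"
begin

text \<open>Substituting y = P exp(\<integral>Q) turns y'' = (A^2 + B) y into a polynomial identity in which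
  comparing degrees forces Q = \<plusminus>A; with a = \<plusminus>A what remains is P'' = -2a P' + (B - a') P.
  Comparing the coefficients just below the top gives b_(n-1) = lc(a) (2 deg P + n).
  Differentiating the equation repeatedly gives P^(k+1) = l_k P' + r_k P, so for deg P = d the rows
  (l_d, r_d) and (l_(d+1), r_(d+1)) both annihilate (P', P) and Delta_d(a, B) = 0. Conversely,
  Delta_d(a, B) = 0 is a Riccati equation for -r_d/l_d; in lowest terms it has the shape -u'/u,
  and then u is a polynomial solution, whose degree is pinned down by b_(n-1).\<close>

lemma deriv_poly_times_exp_poly:
  fixes S F :: "complex poly"
  shows "deriv (\<lambda>x. poly S x * exp (poly F x))
           = (\<lambda>x. poly (pderiv S + S * pderiv F) x * exp (poly F x))"
proof
  fix x :: complex
  have "((\<lambda>x. poly S x * exp (poly F x)) has_field_derivative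
          poly (pderiv S) x * exp (poly F x) + poly S x * (exp (poly F x) * poly (pderiv F) x)) (at x)"
    by (auto intro!: derivative_eq_intros)
  then show "deriv (\<lambda>x. poly S x * exp (poly F x)) x = poly (pderiv S + S * pderiv F) x * exp (poly F x)"
    by (auto dest!: DERIV_imp_deriv simp: algebra_simps)
qed

lemma exists_pderiv_eq: "\<exists>F. pderiv F = (Q :: 'a::field_char_0 poly)"
proof
  let ?F = "\<Sum>i\<le>degree Q. monom (coeff Q i / of_nat (Suc i)) (Suc i)"
  have monom: "pderiv (monom (coeff Q i / of_nat (Suc i)) (Suc i)) = monom (coeff Q i) i" for i
    by (simp add: pderiv_monom del: of_nat_Suc)
  have "pderiv ?F = (\<Sum>i\<le>degree Q. pderiv (monom (coeff Q i / of_nat (Suc i)) (Suc i)))"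
    using higher_pderiv_sum[of 1] by simp
  also have "\<dots> = Q"
    by (simp only: monom poly_as_sum_of_monoms)
  finally show "pderiv ?F = Q" .
qed

lemma has_polyhyperexp_sol_iff:
  "has_polyhyperexp_sol M d \<longleftrightarrow> (\<exists>P Q. P \<noteq> 0 \<and> degree P = d \<and>
     pderiv (pderiv P) + 2 * pderiv P * Q + P * (pderiv Q + Q\<^sup>2) = M * P)"
proof -
  have ode_iff: "(\<forall>x. deriv (deriv (\<lambda>x. poly P x * exp (poly F x))) x
                      = poly M x * (poly P x * exp (poly F x)))
     \<longleftrightarrow> pderiv (pderiv P) + 2 * pderiv P * pderiv F + P * (pderiv (pderiv F) + (pderiv F)\<^sup>2) = M * P"
    for P F :: "complex poly"
  proof -
    have "deriv (deriv (\<lambda>x. poly P x * exp (poly F x)))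
          = (\<lambda>x. poly (pderiv (pderiv P) + 2 * pderiv P * pderiv F
                        + P * (pderiv (pderiv F) + (pderiv F)\<^sup>2)) x * exp (poly F x))"
      unfolding deriv_poly_times_exp_poly
      by (simp add: pderiv_add pderiv_mult algebra_simps power2_eq_square)
    then show ?thesis
      by (simp add: poly_eq_poly_eq_iff[symmetric] fun_eq_iff)
  qed
  show ?thesis
    unfolding has_polyhyperexp_sol_def Let_def ode_iff
    using exists_pderiv_eq by metis
qed

lemma polyexp_exponent_eq_pm:
  fixes A B P Q :: "'a::field_char_0 poly"
  assumes "0 < degree A" and "degree B < degree A" and "P \<noteq> 0"
    and eq: "pderiv (pderiv P) + 2 * pderiv P * Q + P * (pderiv Q + Q\<^sup>2) = (A\<^sup>2 + B) * P"
  shows "Q = A \<or> Q = - A"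
proof (rule ccontr)
  assume "\<not> (Q = A \<or> Q = - A)"
  then have nonzero: "Q - A \<noteq> 0" "Q + A \<noteq> 0"
    by (auto simp: algebra_simps add_eq_0_iff)
  define K where "K = max (degree A) (degree Q)"
  \<comment> \<open>Then (Q - A)(Q + A)P has degree max(deg A, deg Q) + deg P, too large for the other terms.\<close>
  have "smult 2 Q = (Q + A) + (Q - A)" and "smult 2 A = (Q + A) - (Q - A)"
    by (simp_all flip: numeral_mult_conv_smult add: algebra_simps mult_2)
  then have "degree Q \<le> max (degree (Q + A)) (degree (Q - A))"
        and "degree A \<le> max (degree (Q + A)) (degree (Q - A))"
    by (metis degree_add_le_max degree_smult_eq zero_neq_numeral,
        metis degree_diff_le_max degree_smult_eq zero_neq_numeral)
  then have lhs: "K + degree P \<le> degree ((Q - A) * (Q + A) * P)"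
    using nonzero \<open>P \<noteq> 0\<close> unfolding K_def by (simp add: degree_mult_eq max_def split: if_splits)
  have "degree (B * P - pderiv (pderiv P) - 2 * pderiv P * Q - P * pderiv Q) < K + degree P"
  proof -
    have "degree (B * P) \<le> K + degree P - 1"
      using degree_mult_le[of B P] \<open>degree B < degree A\<close> unfolding K_def by simp
    moreover have "degree (pderiv (pderiv P)) \<le> K + degree P - 1"
      using \<open>0 < degree A\<close> unfolding K_def by (simp add: degree_pderiv)
    moreover have "degree (2 * pderiv P * Q) \<le> K + degree P - 1"
    proof (cases "degree P = 0")
      case False
      have "degree (2 * pderiv P * Q) \<le> degree (pderiv P) + degree Q"
        using degree_mult_le[of "2 * pderiv P" Q] degree_mult_le[of 2 "pderiv P"] by simp
      then show ?thesis using False unfolding K_def by (simp add: degree_pderiv)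
    qed (simp add: pderiv_eq_0_iff[symmetric])
    moreover have "degree (P * pderiv Q) \<le> K + degree P - 1"
      using degree_mult_le[of P "pderiv Q"] \<open>0 < degree A\<close> unfolding K_def
      by (simp add: degree_pderiv)
    ultimately have "degree (B * P - pderiv (pderiv P) - 2 * pderiv P * Q - P * pderiv Q)
                       \<le> K + degree P - 1"
      by (intro degree_diff_le)
    then show ?thesis
      using \<open>0 < degree A\<close> unfolding K_def by linarith
  qed
  moreover have "(Q - A) * (Q + A) * P = B * P - pderiv (pderiv P) - 2 * pderiv P * Q - P * pderiv Q"
    using eq by (simp add: algebra_simps power2_eq_square)
  ultimately show False
    using lhs by simp
qed

text \<open>With l_0 = -2a and r_0 = B - a' this is P'' = l_0 P' + r_0 P, the equation iterated by lr.\<close>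
definition solves_reduced_ode :: "'a::idom poly \<Rightarrow> 'a poly \<Rightarrow> 'a poly \<Rightarrow> bool" where
  "solves_reduced_ode a B P \<longleftrightarrow> pderiv (pderiv P) = smult (-2) a * pderiv P + (B - pderiv a) * P"

lemma polyexp_equation_iff_solves_reduced_ode:
  "pderiv (pderiv P) + 2 * pderiv P * a + P * (pderiv a + a\<^sup>2) = (a\<^sup>2 + B) * P
     \<longleftrightarrow> solves_reduced_ode a B P"
  unfolding solves_reduced_ode_def
  by (auto simp: algebra_simps power2_eq_square simp flip: numeral_mult_conv_smult)

lemma has_polyhyperexp_sol_iff_reduced_ode:
  fixes A B M :: "complex poly"
  assumes "0 < degree A" and "degree B < degree A" and M: "M = A\<^sup>2 + B"
  shows "has_polyhyperexp_sol M d \<longleftrightarrow>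
           (\<exists>a P. (a = A \<or> a = - A) \<and> P \<noteq> 0 \<and> degree P = d \<and> solves_reduced_ode a B P)"
proof -
  have "M = a\<^sup>2 + B" if "a = A \<or> a = - A" for a
    using that M by auto
  then show ?thesis
    unfolding has_polyhyperexp_sol_iff
    using polyexp_exponent_eq_pm[OF assms(1,2)] polyexp_equation_iff_solves_reduced_ode M
    by metis
qed

lemma coeff_mult_at_degree_bounds:
  fixes p q :: "'a::comm_semiring_0 poly"
  assumes "degree p \<le> i" and "degree q \<le> j"
  shows "coeff (p * q) (i + j) = coeff p i * coeff q j"
proof (cases "degree p = i \<and> degree q = j")
  case True
  then show ?thesis by (metis coeff_mult_degree_sum)
next
  case False
  then have "degree (p * q) < i + j"
    using degree_mult_le[of p q] assms by linarith
  moreover have "coeff p i = 0 \<or> coeff q j = 0"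
    using False assms by (auto intro: coeff_eq_0)
  ultimately show ?thesis
    using coeff_eq_0 by fastforce
qed

lemma solves_reduced_ode_coeff:
  fixes a B P :: "'a::{idom,ring_char_0} poly"
  assumes ode: "solves_reduced_ode a B P" and "P \<noteq> 0"
    and "0 < degree a" and "degree B < degree a"
  shows "coeff B (degree a - 1) = lead_coeff a * of_nat (2 * degree P + degree a)"
proof -
  define n e where "n = degree a" and "e = degree P"
  \<comment> \<open>Compare the coefficients of x^(n-1+e) in P'' + 2aP' + a'P = BP.\<close>
  define i where "i = n - 1 + e"
  have "coeff (B * P) i = coeff B (n - 1) * lead_coeff P"
    unfolding i_def e_def using assms(4) n_def by (intro coeff_mult_at_degree_bounds) auto
  moreover have "coeff (pderiv a * P) i = of_nat n * lead_coeff a * lead_coeff P"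
  proof -
    have "coeff (pderiv a * P) i = coeff (pderiv a) (n - 1) * lead_coeff P"
      unfolding i_def e_def n_def by (intro coeff_mult_at_degree_bounds) (auto simp: degree_pderiv)
    then show ?thesis
      using \<open>0 < degree a\<close> by (simp add: coeff_pderiv n_def)
  qed
  moreover have "coeff (a * pderiv P) i = lead_coeff a * of_nat e * lead_coeff P"
  proof (cases "e = 0")
    case True
    then show ?thesis unfolding e_def by (simp add: pderiv_eq_0_iff[symmetric])
  next
    case False
    then have "coeff (a * pderiv P) i = lead_coeff a * coeff (pderiv P) (e - 1)"
      using \<open>0 < degree a\<close> coeff_mult_at_degree_bounds[of a n "pderiv P" "e - 1"]
      unfolding i_def n_def e_def by (simp add: degree_pderiv)
    then show ?thesis
      using False by (simp add: coeff_pderiv e_def)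
  qed
  moreover have "coeff (pderiv (pderiv P)) i = 0"
    using \<open>0 < degree a\<close> unfolding i_def n_def e_def
    by (simp add: coeff_pderiv coeff_eq_0)
  moreover have "pderiv (pderiv P) + smult 2 (a * pderiv P) + pderiv a * P = B * P"
    using ode unfolding solves_reduced_ode_def by (simp add: algebra_simps)
  then have "coeff (pderiv (pderiv P) + smult 2 (a * pderiv P) + pderiv a * P) i = coeff (B * P) i"
    by simp
  ultimately have "coeff B (n - 1) * lead_coeff P = lead_coeff a * of_nat (2 * e + n) * lead_coeff P"
    by (simp add: algebra_simps)
  then show ?thesis
    using \<open>P \<noteq> 0\<close> unfolding n_def e_def by simp
qed

lemma higher_pderiv_eq_lr:
  assumes "solves_reduced_ode a B P"
  shows "(pderiv ^^ Suc k) P = fst (lr a B k) * pderiv P + snd (lr a B k) * P"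
proof (induction k)
  case (Suc k)
  have ode: "pderiv (pderiv P) = smult (-2) a * pderiv P + (B - pderiv a) * P"
    using assms unfolding solves_reduced_ode_def .
  obtain l r where lr: "lr a B k = (l, r)" by fastforce
  have "(pderiv ^^ Suc (Suc k)) P = pderiv (l * pderiv P + r * P)"
    using Suc lr by simp
  also have "\<dots> = (pderiv l + r + smult (-2) a * l) * pderiv P + (pderiv r + (B - pderiv a) * l) * P"
    by (simp add: pderiv_add pderiv_mult ode algebra_simps)
  finally show ?case using lr by simp
qed simp

lemma Delta_degree_eq_0:
  assumes ode: "solves_reduced_ode a B P" and "P \<noteq> 0"
  shows "Delta (degree P) a B = 0"
proof -
  define d where "d = degree P"
  obtain l r where lr: "lr a B d = (l, r)" by fastforce
  obtain l' r' where lr': "lr a B (Suc d) = (l', r')" by fastforce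
  have "(pderiv ^^ Suc d) P = 0"
    using degree_higher_pderiv[of d P] by (simp add: pderiv_eq_0_iff d_def)
  moreover from this have "(pderiv ^^ Suc (Suc d)) P = 0" by simp
  ultimately have "r * P = - (l * pderiv P)" and "r' * P = - (l' * pderiv P)"
    using higher_pderiv_eq_lr[OF ode, of d] higher_pderiv_eq_lr[OF ode, of "Suc d"] lr lr'
    by (simp_all add: eq_neg_iff_add_eq_0 add.commute)
  have "Delta d a B * P = l * (r' * P) - l' * (r * P)"
    unfolding Delta_def lr lr' by (simp add: algebra_simps)
  also have "\<dots> = 0"
    using \<open>r * P = _\<close> \<open>r' * P = _\<close> by (simp add: algebra_simps)
  finally show ?thesis
    using \<open>P \<noteq> 0\<close> d_def by simp
qed

lemma degree_lr:
  assumes "0 < degree a" and "degree B < degree a"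
  shows "fst (lr a B k) \<noteq> 0 \<and> degree (fst (lr a B k)) = degree a * k \<and>
         (snd (lr a B k) = 0 \<or> degree (snd (lr a B k)) < degree a * k)"
proof (induction k)
  case (Suc k)
  define n where "n = degree a"
  obtain l r where lr: "lr a B k = (l, r)" by fastforce
  have l: "l \<noteq> 0" "degree l = n * k" and r: "degree r \<le> n * k"
    using Suc lr n_def by auto
  have "degree (smult (-2) a * l) = n + n * k"
    using l \<open>0 < degree a\<close> n_def degree_mult_eq[of a l] by force
  moreover have "degree (pderiv l + r) < n + n * k"
    using degree_add_le_max[of "pderiv l" r] l r \<open>0 < degree a\<close> n_def
    by (simp add: degree_pderiv)
  ultimately have l': "degree (pderiv l + r + smult (-2) a * l) = n * Suc k"
    using degree_add_eq_right[of "pderiv l + r" "smult (-2) a * l"] by simp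
  have "degree (B - pderiv a) \<le> n - 1"
    using \<open>degree B < degree a\<close> n_def by (intro degree_diff_le) (auto simp: degree_pderiv)
  then have "degree ((B - pderiv a) * l) \<le> n - 1 + n * k"
    using degree_mult_le[of "B - pderiv a" l] l by simp
  moreover have "degree (pderiv r) \<le> n - 1 + n * k"
    using r by (simp add: degree_pderiv)
  ultimately have "degree (pderiv r + (B - pderiv a) * l) \<le> n - 1 + n * k"
    by (intro degree_add_le)
  then have "degree (pderiv r + (B - pderiv a) * l) < n * Suc k"
    using \<open>0 < degree a\<close> n_def by simp
  then show ?case
    using lr l' \<open>0 < degree a\<close> n_def by auto
qed simp

lemma dvd_pderiv_add_imp_eq_neg_pderiv:
  fixes u v :: "'a::{idom,ring_char_0} poly"
  assumes dvd: "u dvd pderiv u + v" and v: "v = 0 \<or> degree v < degree u"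
  shows "v = - pderiv u"
proof (rule ccontr)
  assume "v \<noteq> - pderiv u"
  then have nonzero: "pderiv u + v \<noteq> 0"
    by (metis add_eq_0_iff)
  then have "degree u \<le> degree (pderiv u + v)"
    using dvd dvd_imp_degree_le by blast
  moreover have "degree (pderiv u + v) < degree u"
  proof (cases "degree u = 0")
    case True
    then show ?thesis using v nonzero by (simp add: pderiv_eq_0_iff[symmetric])
  next
    case False
    then show ?thesis
      using degree_add_le_max[of "pderiv u" v] v by (auto simp: degree_pderiv)
  qed
  ultimately show False by simp
qed

text \<open>Writing l_d = g u, r_d = g v with g = gcd l_d r_d, Delta_d = 0 makes u divide v (u' + v);
  coprimality and deg v < deg u force v = -u', which turns Delta_d = 0 into the equation for u.\<close>
lemma Delta_eq_0_imp_solves_reduced_ode: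
  fixes a B :: "complex poly"
  assumes "0 < degree a" and "degree B < degree a" and "Delta d a B = 0"
  shows "\<exists>P. P \<noteq> 0 \<and> solves_reduced_ode a B P"
proof -
  obtain l r where lr: "lr a B d = (l, r)" by fastforce
  have "l \<noteq> 0" and lr_deg: "r = 0 \<or> degree r < degree l"
    using degree_lr[OF assms(1,2), of d] lr by auto
  define g u v where "g = gcd l r" and "u = l div g" and "v = r div g"
  have "g \<noteq> 0" and l: "l = g * u" and r: "r = g * v"
    using \<open>l \<noteq> 0\<close> unfolding g_def u_def v_def by simp_all
  have "coprime u v"
    using \<open>l \<noteq> 0\<close> unfolding u_def v_def g_def by (intro div_gcd_coprime) simp
  have "u \<noteq> 0"
    using \<open>l \<noteq> 0\<close> l by auto
  define r0 where "r0 = B - pderiv a"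
  define l0 where "l0 = smult (-2) a"
  have "Delta d a B = (pderiv r + r0 * l) * l - (pderiv l + r + l0 * l) * r"
    unfolding Delta_def r0_def l0_def using lr by simp
  also have "\<dots> = g * g * (pderiv v * u + r0 * u * u - pderiv u * v - v * v - l0 * u * v)"
    unfolding l r by (simp add: pderiv_mult algebra_simps)
  finally have "g * g * (pderiv v * u + r0 * u * u - pderiv u * v - v * v - l0 * u * v) = 0"
    using \<open>Delta d a B = 0\<close> by simp
  then have riccati: "pderiv v * u + r0 * u * u - pderiv u * v - v * v - l0 * u * v = 0"
    using \<open>g \<noteq> 0\<close> by simp
  then have "v * (pderiv u + v) = u * (pderiv v + r0 * u - l0 * v)"
    by (simp add: algebra_simps)
  then have "u dvd pderiv u + v"
    using \<open>coprime u v\<close> by (metis coprime_dvd_mult_right_iff dvd_triv_left)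
  moreover have "v = 0 \<or> degree v < degree u"
    using lr_deg \<open>g \<noteq> 0\<close> \<open>u \<noteq> 0\<close> unfolding l r by (cases "v = 0") (auto simp: degree_mult_eq)
  ultimately have "v = - pderiv u"
    by (rule dvd_pderiv_add_imp_eq_neg_pderiv)
  then have "u * (r0 * u + l0 * pderiv u - pderiv (pderiv u)) = 0"
    using riccati by (simp add: pderiv_minus algebra_simps)
  then have "r0 * u + l0 * pderiv u - pderiv (pderiv u) = 0"
    using \<open>u \<noteq> 0\<close> by simp
  then have "solves_reduced_ode a B u"
    unfolding solves_reduced_ode_def r0_def l0_def by (metis add.commute right_minus_eq)
  then show ?thesis
    using \<open>u \<noteq> 0\<close> by blast
qed

lemma ex_solves_reduced_ode_iff:
  fixes a B :: "complex poly"
  assumes "0 < degree a" and "degree B < degree a"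
  shows "(\<exists>P. P \<noteq> 0 \<and> degree P = d \<and> solves_reduced_ode a B P) \<longleftrightarrow>
           (coeff B (degree a - 1))\<^sup>2 = (lead_coeff a * of_nat (2 * d + degree a))\<^sup>2
           \<and> Delta d a B = 0"
proof
  assume "\<exists>P. P \<noteq> 0 \<and> degree P = d \<and> solves_reduced_ode a B P"
  then obtain P where "P \<noteq> 0" "degree P = d" and ode: "solves_reduced_ode a B P"
    by blast
  then show "(coeff B (degree a - 1))\<^sup>2 = (lead_coeff a * of_nat (2 * d + degree a))\<^sup>2
             \<and> Delta d a B = 0"
    using solves_reduced_ode_coeff[OF ode \<open>P \<noteq> 0\<close> assms] Delta_degree_eq_0[OF ode] by simp
next
  assume sq: "(coeff B (degree a - 1))\<^sup>2 = (lead_coeff a * of_nat (2 * d + degree a))\<^sup>2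
             \<and> Delta d a B = 0"
  then obtain P where "P \<noteq> 0" and ode: "solves_reduced_ode a B P"
    using Delta_eq_0_imp_solves_reduced_ode[OF assms] by blast
  then have "(lead_coeff a * of_nat (2 * degree P + degree a))\<^sup>2
             = (lead_coeff a * of_nat (2 * d + degree a) :: complex)\<^sup>2"
    using sq solves_reduced_ode_coeff[OF ode \<open>P \<noteq> 0\<close> assms] by simp
  moreover have "lead_coeff a \<noteq> 0"
    using \<open>0 < degree a\<close> by auto
  ultimately have "(of_nat (2 * degree P + degree a) :: complex)\<^sup>2 = (of_nat (2 * d + degree a))\<^sup>2"
    by (simp add: power_mult_distrib)
  then have "(2 * degree P + degree a)\<^sup>2 = (2 * d + degree a)\<^sup>2"
    by (metis of_nat_eq_iff of_nat_power)
  then have "degree P = d"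
    by (simp add: power2_eq_iff_nonneg)
  then show "\<exists>P. P \<noteq> 0 \<and> degree P = d \<and> solves_reduced_ode a B P"
    using \<open>P \<noteq> 0\<close> ode by blast
qed

lemma lead_coeff_eq_pm:
  fixes A :: "'a::comm_ring_1 poly"
  assumes "lead_coeff A = 1" and "a = A \<or> a = - A"
  shows "lead_coeff a = 1 \<or> lead_coeff a = -1"
  using assms by (auto simp: lead_coeff_minus)

lemma has_polyhyperexp_sol_iff_Delta:
  fixes A B M :: "complex poly"
  assumes "0 < degree A" and "degree B < degree A" and "lead_coeff A = 1" and "M = A\<^sup>2 + B"
  shows "has_polyhyperexp_sol M d \<longleftrightarrow>
           (coeff B (degree A - 1))\<^sup>2 = (of_nat (2 * d + degree A))\<^sup>2
           \<and> (Delta d A B = 0 \<or> Delta d (- A) B = 0)"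
proof -
  have solvable: "(\<exists>P. P \<noteq> 0 \<and> degree P = d \<and> solves_reduced_ode a B P) \<longleftrightarrow>
      (coeff B (degree A - 1))\<^sup>2 = (of_nat (2 * d + degree A))\<^sup>2 \<and> Delta d a B = 0"
    if a: "a = A \<or> a = - A" for a
  proof -
    have "(lead_coeff a * of_nat (2 * d + degree A))\<^sup>2 = (of_nat (2 * d + degree A) :: complex)\<^sup>2"
      using lead_coeff_eq_pm[OF assms(3) a] by (auto simp: power_mult_distrib)
    moreover have "degree a = degree A"
      using a by auto
    ultimately show ?thesis
      using ex_solves_reduced_ode_iff[of a B d] assms(1,2) by simp
  qed
  have "has_polyhyperexp_sol M d \<longleftrightarrow>
      (\<exists>P. P \<noteq> 0 \<and> degree P = d \<and> solves_reduced_ode A B P) \<or>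
      (\<exists>P. P \<noteq> 0 \<and> degree P = d \<and> solves_reduced_ode (- A) B P)"
    unfolding has_polyhyperexp_sol_iff_reduced_ode[OF assms(1,2,4)] by blast
  then show ?thesis
    using solvable[of A] solvable[of "- A"] by blast
qed

lemma has_polyhyperexp_sol_coeff_eq_pm:
  fixes A B M :: "complex poly"
  assumes "0 < degree A" and "degree B < degree A" and "lead_coeff A = 1" and "M = A\<^sup>2 + B"
    and "has_polyhyperexp_sol M d"
  shows "coeff B (degree A - 1) = of_nat (2 * d + degree A)
         \<or> coeff B (degree A - 1) = - of_nat (2 * d + degree A)"
proof -
  obtain a P where a: "a = A \<or> a = - A" and "P \<noteq> 0" "degree P = d"
    and ode: "solves_reduced_ode a B P"
    using assms(5) unfolding has_polyhyperexp_sol_iff_reduced_ode[OF assms(1,2,4)] by blast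
  have "degree a = degree A"
    using a by auto
  then have "coeff B (degree A - 1) = lead_coeff a * of_nat (2 * d + degree A)"
    using solves_reduced_ode_coeff[OF ode \<open>P \<noteq> 0\<close>] assms(1,2) \<open>degree P = d\<close> by simp
  then show ?thesis
    using lead_coeff_eq_pm[OF assms(3) a] by auto
qed

theorem mainTheorem7:
  fixes n d :: nat and A B M :: "complex poly"
  assumes "n \<ge> 1"
    and "lead_coeff A = 1" and "degree A = n"
    and "degree B < n"
    and "M = A ^ 2 + B"
  shows "(has_polyhyperexp_sol M d \<longleftrightarrow>
            (coeff B (n - 1)) ^ 2 = (of_nat (n + 2 * d)) ^ 2
            \<and> Delta d A B * Delta d (- A) B = 0)
         \<and> (has_polyhyperexp_sol M d \<longrightarrow>
            coeff B (n - 1) = of_nat (2 * d + n) \<or> - coeff B (n - 1) = of_nat (2 * d + n))"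
proof -
  have "0 < degree A" and "degree B < degree A"
    using assms(1,3,4) by simp_all
  note sol_iff = has_polyhyperexp_sol_iff_Delta[OF this assms(2,5), of d, unfolded assms(3)]
   and coeff_eq_pm = has_polyhyperexp_sol_coeff_eq_pm[OF this assms(2,5), of d, unfolded assms(3)]
  have "has_polyhyperexp_sol M d \<longleftrightarrow>
      (coeff B (n - 1))\<^sup>2 = (of_nat (n + 2 * d))\<^sup>2 \<and> Delta d A B * Delta d (- A) B = 0"
    unfolding add.commute[of n] mult_eq_0_iff by (rule sol_iff)
  moreover have "coeff B (n - 1) = of_nat (2 * d + n) \<or> - coeff B (n - 1) = of_nat (2 * d + n)"
    if "has_polyhyperexp_sol M d"
    using coeff_eq_pm[OF that] by auto
  ultimately show ?thesis
    by blast
qed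

end
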